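(* Let $m\ge 2$, $\alpha_0\in(0,\tfrac{\pi}{2})$ and $b=\tfrac12\tan\alpha_0$. Then the set $$S^m_{\alpha_0}=\Big\{z\in\mathbb{C}^m:\ \text{for each }k,\ z_k=0\text{ or }|\arg z_k|\le\alpha_0,\ \ \sum_{k=1}^m z_k=1\Big\}$$ is a convex polytope: every $z\in S^m_{\alpha_0}$ is a convex combination of the $m^2$ points $e^1,\dots,e^m$ (standard basis vectors) and the $m(m-1)$ vectors having exactly two nonzero coordinates, one equal to $\tfrac12+bi$ and another equal to $\tfrac12-bi$. In particular $S^m_{\alpha_0}$ is the convex hull of these $m^2$ points.
   Context: $\arg$ denotes the principal argument with values in $(-\pi,\pi]$. A convex polytope in $\mathbb{C}^m$ is the convex hull of finitely many points. *)

theory Defs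
  imports "HOL-Analysis.Analysis"
begin

definition S_set :: "real \<Rightarrow> (complex ^ 'm::finite) set" where
  "S_set \<alpha>0 = {z. (\<forall>k. z $ k = 0 \<or> \<bar>Arg (z $ k)\<bar> \<le> \<alpha>0) \<and> (\<Sum>k\<in>UNIV. z $ k) = 1}"

definition two_vec :: "real \<Rightarrow> 'm::finite \<Rightarrow> 'm \<Rightarrow> complex ^ 'm" where
  "two_vec b j k = (\<chi> i. if i = j then Complex (1/2) b
                         else if i = k then Complex (1/2) (- b) else 0)"

definition vertex_set :: "real \<Rightarrow> (complex ^ 'm::finite) set" where
  "vertex_set b = {axis k 1 | k. True} \<union> {two_vec b j k | j k. j \<noteq> k}"

end

theory Submission
  imports Defs
begin

text \<open>For \<open>0 < \<alpha>0 < \<pi>/2\<close> the sector condition on \<open>w\<close> is the linear condition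
  \<open>\<bar>Im w\<bar> \<le> 2 b Re w\<close>, so \<open>S_set \<alpha>0\<close> is convex and contains the proposed vertices.
  Conversely, write \<open>z\<^sub>k = x\<^sub>k + i y\<^sub>k\<close> with \<open>\<Sum> x = 1\<close>, \<open>\<Sum> y = 0\<close>. A transport plan \<open>\<gamma>\<close>
  (zero on the diagonal) from the positive to the negative part of \<open>y\<close> puts weight
  \<open>\<gamma>\<^sub>j\<^sub>k / b\<close> on the vertex with \<open>1/2 + b i\<close> at \<open>j\<close> and \<open>1/2 - b i\<close> at \<open>k\<close>; these produce all
  of \<open>y\<close> and the part \<open>\<bar>y\<^sub>k\<bar>/(2b)\<close> of \<open>x\<^sub>k\<close>. The rest \<open>x\<^sub>k - \<bar>y\<^sub>k\<bar>/(2b) \<ge> 0\<close> is put on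
  the basis vector \<open>e\<^sub>k\<close>, and the weights sum to 1 because \<open>\<Sum> \<bar>y\<bar> = 2 \<Sum> \<gamma>\<close>.\<close>

lemma Arg_sector_iff_tan:
  fixes w :: complex and a :: real
  assumes "0 < a" "a < pi/2"
  shows "(w = 0 \<or> \<bar>Arg w\<bar> \<le> a) \<longleftrightarrow> \<bar>Im w\<bar> \<le> tan a * Re w"
proof -
  have tan_pos: "tan a > 0" using assms by (simp add: tan_gt_zero)
  have arctan_tan_a: "arctan (tan a) = a" using assms by (simp add: arctan_tan)
  have Arg_le_iff: "\<bar>Arg w\<bar> \<le> a \<longleftrightarrow> \<bar>Im w\<bar> \<le> tan a * Re w" if re: "Re w > 0"
  proof -
    have "\<bar>Arg w\<bar> = arctan \<bar>Im w / Re w\<bar>"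
      using arg_conv_arctan[OF re] by (simp add: abs_if arctan_minus)
    also have "\<dots> \<le> a \<longleftrightarrow> \<bar>Im w / Re w\<bar> \<le> tan a"
      using arctan_tan_a arctan_le_iff by metis
    also have "\<dots> \<longleftrightarrow> \<bar>Im w\<bar> \<le> tan a * Re w"
      using re by (simp add: abs_div divide_le_eq)
    finally show ?thesis .
  qed
  show ?thesis
  proof (cases "Re w > 0")
    case True
    then show ?thesis using Arg_le_iff by (auto simp: complex_eq_iff)
  next
    case False
    have "\<bar>Arg w\<bar> > a" if "w \<noteq> 0"
      using False Arg_Re_pos[of w] assms that by fastforce
    moreover have "\<bar>Im w\<bar> \<le> tan a * Re w \<longleftrightarrow> w = 0"
    proof -
      have "tan a * Re w \<le> 0" using False tan_pos by (simp add: mult_nonneg_nonpos)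
      then have "\<bar>Im w\<bar> \<le> tan a * Re w \<longleftrightarrow> Im w = 0 \<and> tan a * Re w = 0"
        unfolding abs_le_iff by linarith
      then show ?thesis using tan_pos by (auto simp: complex_eq_iff)
    qed
    ultimately show ?thesis by fastforce
  qed
qed

lemma zero_sum_transport_plan:
  fixes y :: "'a::finite \<Rightarrow> real"
  assumes "(\<Sum>i\<in>UNIV. y i) = 0"
  obtains \<gamma> :: "'a \<Rightarrow> 'a \<Rightarrow> real" where
    "\<And>j k. 0 \<le> \<gamma> j k" "\<And>j. \<gamma> j j = 0"
    "\<And>j. (\<Sum>k\<in>UNIV. \<gamma> j k) = max 0 (y j)"
    "\<And>k. (\<Sum>j\<in>UNIV. \<gamma> j k) = max 0 (- y k)"
proof -
  define pos where "pos i = max 0 (y i)" for i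
  define neg where "neg i = max 0 (- y i)" for i
  define Y where "Y = (\<Sum>i\<in>UNIV. pos i)"
  have nonneg: "0 \<le> pos i" "0 \<le> neg i" for i unfolding pos_def neg_def by auto
  have "Y - (\<Sum>i\<in>UNIV. neg i) = (\<Sum>i\<in>UNIV. y i)"
    unfolding Y_def sum_subtractf[symmetric] pos_def neg_def by (rule sum.cong) auto
  then have sum_neg: "(\<Sum>i\<in>UNIV. neg i) = Y" using assms by simp
  have cancel: "c * Y / Y = c" if "0 \<le> c" "c \<le> Y" for c
    using that by (cases "Y = 0") auto
  have "pos i \<le> Y" for i
    unfolding Y_def by (rule member_le_sum) (use nonneg in auto)
  moreover have "neg i \<le> Y" for i
    unfolding sum_neg[symmetric] by (rule member_le_sum) (use nonneg in auto)
  ultimately have rows: "(\<Sum>k\<in>UNIV. pos j * neg k / Y) = pos j"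
    and cols: "(\<Sum>j\<in>UNIV. pos j * neg k / Y) = neg k" for j k
    using cancel nonneg sum_neg
    by (simp_all add: sum_divide_distrib[symmetric] sum_distrib_left[symmetric]
        sum_distrib_right[symmetric] Y_def[symmetric] mult.commute)
  \<comment> \<open>the product coupling; if \<open>Y = 0\<close> it is \<open>0\<close> by \<open>x / 0 = 0\<close>, as both marginals then vanish\<close>
  show thesis
  proof (rule that[of "\<lambda>j k. pos j * neg k / Y"])
    show "0 \<le> pos j * neg k / Y" for j k
      using nonneg by (intro divide_nonneg_nonneg mult_nonneg_nonneg) (simp_all add: Y_def sum_nonneg)
    show "pos j * neg j / Y = 0" for j unfolding pos_def neg_def by auto
  qed (use rows cols in \<open>simp_all add: pos_def neg_def\<close>)
qed

lemma convex_sum_Plus: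
  assumes "convex C" "finite I" "finite J"
    and "\<And>i. i \<in> I \<Longrightarrow> 0 \<le> c i" "\<And>j. j \<in> J \<Longrightarrow> 0 \<le> d j"
    and "sum c I + sum d J = 1"
    and "\<And>i. i \<in> I \<Longrightarrow> p i \<in> C" "\<And>j. j \<in> J \<Longrightarrow> q j \<in> C"
  shows "(\<Sum>i\<in>I. c i *\<^sub>R p i) + (\<Sum>j\<in>J. d j *\<^sub>R q j) \<in> C"
proof -
  have "(\<Sum>u\<in>I <+> J. case_sum c d u *\<^sub>R case_sum p q u) \<in> C"
    by (rule convex_sum) (use assms in \<open>auto simp: sum.Plus o_def\<close>)
  then show ?thesis using assms(2,3) by (simp add: sum.Plus o_def)
qed

definition sector_simplex :: "real \<Rightarrow> (complex ^ 'm::finite) set" where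
  "sector_simplex t =
     {z. (\<forall>k. \<bar>Im (z $ k)\<bar> \<le> t * Re (z $ k)) \<and> (\<Sum>k\<in>UNIV. z $ k) = 1}"

lemma S_set_eq_sector_simplex:
  assumes "0 < a" "a < pi/2"
  shows "S_set a = sector_simplex (tan a)"
  unfolding S_set_def sector_simplex_def using Arg_sector_iff_tan[OF assms] by blast

lemma convex_sector_simplex: "convex (sector_simplex t)"
proof (unfold convex_def sector_simplex_def, safe)
  fix x y :: "complex ^ 'm" and u v :: real and k
  assume hx: "\<forall>k. \<bar>Im (x $ k)\<bar> \<le> t * Re (x $ k)" and hy: "\<forall>k. \<bar>Im (y $ k)\<bar> \<le> t * Re (y $ k)"
    and u: "0 \<le> u" and v: "0 \<le> v"
  have "\<bar>u * Im (x $ k) + v * Im (y $ k)\<bar> \<le> u * \<bar>Im (x $ k)\<bar> + v * \<bar>Im (y $ k)\<bar>"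
    using u v by (simp add: abs_mult abs_triangle_ineq[THEN order_trans])
  also have "\<dots> \<le> u * (t * Re (x $ k)) + v * (t * Re (y $ k))"
    using hx hy u v by (simp add: add_mono mult_left_mono)
  finally show "\<bar>Im ((u *\<^sub>R x + v *\<^sub>R y) $ k)\<bar> \<le> t * Re ((u *\<^sub>R x + v *\<^sub>R y) $ k)"
    by (simp add: algebra_simps)
next
  fix x y :: "complex ^ 'm" and u v :: real
  assume "(\<Sum>k\<in>UNIV. x $ k) = 1" "(\<Sum>k\<in>UNIV. y $ k) = 1" "u + v = 1"
  then show "(\<Sum>k\<in>UNIV. (u *\<^sub>R x + v *\<^sub>R y) $ k) = 1"
    by (simp add: sum.distrib scaleR_sum_right[symmetric] scaleR_add_left[symmetric])
qed

lemma finite_vertex_set: "finite (vertex_set b :: (complex ^ 'm::finite) set)"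
proof -
  have "vertex_set b \<subseteq> range (\<lambda>k. axis k 1) \<union> range (\<lambda>(j, k). two_vec b j (k::'m))"
    unfolding vertex_set_def by auto
  then show ?thesis by (rule finite_subset) auto
qed

lemma vertex_set_subset_sector_simplex:
  assumes "0 \<le> b"
  shows "vertex_set b \<subseteq> (sector_simplex (2 * b) :: (complex ^ 'm::finite) set)"
proof
  fix v :: "complex ^ 'm" assume "v \<in> vertex_set b"
  then consider (axis) k where "v = axis k 1" | (two) j k where "j \<noteq> k" "v = two_vec b j k"
    unfolding vertex_set_def by blast
  then show "v \<in> sector_simplex (2 * b)"
  proof cases
    case axis
    then show ?thesis using assms by (auto simp: sector_simplex_def axis_def)
  next
    case two
    have "(\<Sum>i\<in>UNIV. v $ i) =
        (\<Sum>i\<in>UNIV. (if i = j then Complex (1/2) b else 0) + (if i = k then Complex (1/2) (-b) else 0))"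
      using two by (intro sum.cong) (auto simp: two_vec_def)
    also have "\<dots> = 1" by (simp add: sum.distrib complex_eq_iff)
    finally show ?thesis using two assms by (auto simp: sector_simplex_def two_vec_def)
  qed
qed

lemma two_vec_combination_nth:
  fixes \<gamma> :: "'m::finite \<Rightarrow> 'm \<Rightarrow> real"
  assumes "\<gamma> i i = 0"
  shows "(\<Sum>(j, k)\<in>UNIV. \<gamma> j k *\<^sub>R two_vec b j k) $ i =
    Complex (((\<Sum>k\<in>UNIV. \<gamma> i k) + (\<Sum>j\<in>UNIV. \<gamma> j i)) / 2)
            (b * ((\<Sum>k\<in>UNIV. \<gamma> i k) - (\<Sum>j\<in>UNIV. \<gamma> j i)))"
proof -
  have "(\<gamma> j k *\<^sub>R two_vec b j k) $ i =
      (if j = i then Complex (\<gamma> j k / 2) (b * \<gamma> j k) else 0)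
    + (if k = i then Complex (\<gamma> j k / 2) (- b * \<gamma> j k) else 0)" for j k
    using assms by (auto simp: two_vec_def complex_eq_iff)
  moreover have "(\<Sum>j\<in>UNIV. \<Sum>k\<in>UNIV. if j = i then f j k else 0) = (\<Sum>k\<in>UNIV. f i k)"
    for f :: "'m \<Rightarrow> 'm \<Rightarrow> complex"
    by (subst sum.swap) simp
  ultimately have "(\<Sum>(j, k)\<in>UNIV. \<gamma> j k *\<^sub>R two_vec b j k) $ i =
      (\<Sum>k\<in>UNIV. Complex (\<gamma> i k / 2) (b * \<gamma> i k))
    + (\<Sum>j\<in>UNIV. Complex (\<gamma> j i / 2) (- b * \<gamma> j i))"
    by (simp add: sum_component sum.cartesian_product[symmetric] sum.distrib
        UNIV_Times_UNIV[symmetric] del: UNIV_Times_UNIV)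
  then show ?thesis
    by (simp add: complex_eq_iff Re_sum Im_sum sum_divide_distrib sum_distrib_left
        add_divide_distrib right_diff_distrib sum_negf)
qed

lemma axis_two_vec_combination_in_convex_hull:
  fixes \<mu> :: "'m::finite \<Rightarrow> real" and \<gamma> :: "'m \<Rightarrow> 'm \<Rightarrow> real"
  assumes "\<And>i. 0 \<le> \<mu> i" "\<And>j k. 0 \<le> \<gamma> j k" "\<And>j. \<gamma> j j = 0"
    and "(\<Sum>i\<in>UNIV. \<mu> i) + (\<Sum>(j, k)\<in>UNIV. \<gamma> j k) = 1"
  shows "(\<Sum>i\<in>UNIV. \<mu> i *\<^sub>R axis i 1) + (\<Sum>(j, k)\<in>UNIV. \<gamma> j k *\<^sub>R two_vec b j k)
           \<in> convex hull vertex_set b"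
proof -
  define D where "D = {(j, k). j \<noteq> (k::'m)}"
  have off_diag: "(\<Sum>(j, k)\<in>UNIV. \<gamma> j k *\<^sub>R f j k) = (\<Sum>(j, k)\<in>D. \<gamma> j k *\<^sub>R f j k)"
    for f :: "'m \<Rightarrow> 'm \<Rightarrow> 'v::real_vector"
    using assms(3) by (intro sum.mono_neutral_right) (auto simp: D_def)
  have "(\<Sum>(j, k)\<in>UNIV. \<gamma> j k) = (\<Sum>(j, k)\<in>D. \<gamma> j k)"
    using off_diag[of "\<lambda>_ _. 1::real"] by simp
  then have "(\<Sum>i\<in>UNIV. \<mu> i *\<^sub>R axis i 1)
      + (\<Sum>p\<in>D. (case p of (j, k) \<Rightarrow> \<gamma> j k) *\<^sub>R (case p of (j, k) \<Rightarrow> two_vec b j k))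
      \<in> convex hull vertex_set b"
    by (intro convex_sum_Plus)
      (use assms in \<open>auto simp: D_def vertex_set_def intro: hull_inc\<close>)
  then show ?thesis unfolding off_diag by (simp add: split_def)
qed

lemma axis_two_vec_decomposition:
  fixes z :: "complex ^ 'm::finite" and \<gamma> :: "'m \<Rightarrow> 'm \<Rightarrow> real"
  assumes "b \<noteq> 0" "\<And>j. \<gamma> j j = 0"
    and rows: "\<And>j. (\<Sum>k\<in>UNIV. \<gamma> j k) = max 0 (Im (z $ j))"
    and cols: "\<And>k. (\<Sum>j\<in>UNIV. \<gamma> j k) = max 0 (- Im (z $ k))"
  shows "z = (\<Sum>i\<in>UNIV. (Re (z $ i) - \<bar>Im (z $ i)\<bar> / (2 * b)) *\<^sub>R axis i 1)
           + (\<Sum>(j, k)\<in>UNIV. (\<gamma> j k / b) *\<^sub>R two_vec b j k)"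
proof (unfold vec_eq_iff, intro allI)
  fix i
  define x where "x = Re (z $ i) - \<bar>Im (z $ i)\<bar> / (2 * b)"
  have abs_eq_max_sum: "\<bar>t\<bar> = max 0 t + max 0 (- t)" for t :: real by auto
  have axis_part: "(\<Sum>i'\<in>UNIV. (Re (z $ i') - \<bar>Im (z $ i')\<bar> / (2 * b)) *\<^sub>R axis i' 1 :: complex ^ 'm) $ i
      = of_real x"
    by (simp add: x_def sum_component axis_def of_real_def if_distrib[of "scaleR _"] cong: if_cong)
  have "(\<Sum>(j, k)\<in>UNIV. (\<gamma> j k / b) *\<^sub>R two_vec b j k) $ i =
      Complex (((\<Sum>k\<in>UNIV. \<gamma> i k / b) + (\<Sum>j\<in>UNIV. \<gamma> j i / b)) / 2)
              (b * ((\<Sum>k\<in>UNIV. \<gamma> i k / b) - (\<Sum>j\<in>UNIV. \<gamma> j i / b)))"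
    by (rule two_vec_combination_nth) (simp add: assms(2))
  also have "\<dots> = Complex (\<bar>Im (z $ i)\<bar> / (2 * b)) (Im (z $ i))"
    using assms(1)
    by (simp add: sum_divide_distrib[symmetric] rows cols abs_eq_max_sum
        add_divide_distrib[symmetric] diff_divide_distrib[symmetric])
  finally show "z $ i = ((\<Sum>i\<in>UNIV. (Re (z $ i) - \<bar>Im (z $ i)\<bar> / (2 * b)) *\<^sub>R axis i 1)
      + (\<Sum>(j, k)\<in>UNIV. (\<gamma> j k / b) *\<^sub>R two_vec b j k)) $ i"
    using axis_part by (simp add: x_def complex_eq_iff)
qed

lemma sector_simplex_subset_convex_hull:
  assumes "0 < b"
  shows "sector_simplex (2 * b) \<subseteq> convex hull (vertex_set b :: (complex ^ 'm::finite) set)"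
proof
  fix z :: "complex ^ 'm" assume "z \<in> sector_simplex (2 * b)"
  then have cone: "\<And>i. \<bar>Im (z $ i)\<bar> \<le> 2 * b * Re (z $ i)"
    and sum_z: "(\<Sum>i\<in>UNIV. z $ i) = 1"
    unfolding sector_simplex_def by auto
  have "(\<Sum>i\<in>UNIV. Im (z $ i)) = 0" using sum_z by (simp flip: Im_sum)
  then obtain \<gamma> :: "'m \<Rightarrow> 'm \<Rightarrow> real" where \<gamma>: "\<And>j k. 0 \<le> \<gamma> j k" "\<And>j. \<gamma> j j = 0"
      and rows: "\<And>j. (\<Sum>k\<in>UNIV. \<gamma> j k) = max 0 (Im (z $ j))"
      and cols: "\<And>k. (\<Sum>j\<in>UNIV. \<gamma> j k) = max 0 (- Im (z $ k))"
    using zero_sum_transport_plan by blast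
  define \<mu> where "\<mu> i = Re (z $ i) - \<bar>Im (z $ i)\<bar> / (2 * b)" for i
  define \<gamma>' where "\<gamma>' j k = \<gamma> j k / b" for j k
  have abs_eq_max_sum: "\<bar>x\<bar> = max 0 x + max 0 (- x)" for x :: real by auto
  have "(\<Sum>i\<in>UNIV. \<bar>Im (z $ i)\<bar>) = (\<Sum>j\<in>UNIV. \<Sum>k\<in>UNIV. \<gamma> j k) + (\<Sum>k\<in>UNIV. \<Sum>j\<in>UNIV. \<gamma> j k)"
    by (simp add: abs_eq_max_sum rows cols sum.distrib)
  also have "(\<Sum>k\<in>UNIV. \<Sum>j\<in>UNIV. \<gamma> j k) = (\<Sum>j\<in>UNIV. \<Sum>k\<in>UNIV. \<gamma> j k)"
    by (rule sum.swap)
  finally have sum_abs_Im: "(\<Sum>i\<in>UNIV. \<bar>Im (z $ i)\<bar>) = 2 * (\<Sum>j\<in>UNIV. \<Sum>k\<in>UNIV. \<gamma> j k)"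
    by simp
  have "(\<Sum>i\<in>UNIV. Re (z $ i)) = 1" using sum_z by (simp flip: Re_sum)
  then have "(\<Sum>i\<in>UNIV. \<mu> i) = 1 - (\<Sum>j\<in>UNIV. \<Sum>k\<in>UNIV. \<gamma> j k) / b"
    using assms by (simp add: \<mu>_def sum_subtractf sum_divide_distrib[symmetric] sum_abs_Im)
  moreover have "(\<Sum>(j, k)\<in>UNIV. \<gamma>' j k) = (\<Sum>j\<in>UNIV. \<Sum>k\<in>UNIV. \<gamma> j k) / b"
    by (simp add: \<gamma>'_def sum.cartesian_product[symmetric] sum_divide_distrib
        UNIV_Times_UNIV[symmetric] del: UNIV_Times_UNIV)
  ultimately have weights: "(\<Sum>i\<in>UNIV. \<mu> i) + (\<Sum>(j, k)\<in>UNIV. \<gamma>' j k) = 1" by simp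
  have "0 \<le> \<mu> i" for i using cone[of i] assms by (simp add: \<mu>_def field_simps)
  then have "(\<Sum>i\<in>UNIV. \<mu> i *\<^sub>R axis i 1) + (\<Sum>(j, k)\<in>UNIV. \<gamma>' j k *\<^sub>R two_vec b j k)
      \<in> convex hull vertex_set b"
    using \<gamma> assms weights by (intro axis_two_vec_combination_in_convex_hull) (simp_all add: \<gamma>'_def)
  moreover have "z = (\<Sum>i\<in>UNIV. \<mu> i *\<^sub>R axis i 1) + (\<Sum>(j, k)\<in>UNIV. \<gamma>' j k *\<^sub>R two_vec b j k)"
    unfolding \<mu>_def \<gamma>'_def using assms \<gamma>(2) rows cols by (intro axis_two_vec_decomposition) simp_all
  ultimately show "z \<in> convex hull vertex_set b" by simp
qed

theorem theorem3p2:
  fixes \<alpha>0 b :: real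
  assumes "CARD('m::finite) \<ge> 2"
    and "0 < \<alpha>0" and "\<alpha>0 < pi / 2"
    and "b = tan \<alpha>0 / 2"
  shows "polytope (S_set \<alpha>0 :: (complex ^ 'm) set)
         \<and> S_set \<alpha>0 = convex hull (vertex_set b :: (complex ^ 'm) set)"
proof -
  have "0 < tan \<alpha>0" using assms(2,3) by (rule tan_gt_zero)
  then have b_pos: "0 < b" using assms(4) by simp
  have S_eq: "S_set \<alpha>0 = (sector_simplex (2 * b) :: (complex ^ 'm) set)"
    unfolding assms(4) using S_set_eq_sector_simplex[OF assms(2,3)] by simp
  have "S_set \<alpha>0 = convex hull (vertex_set b :: (complex ^ 'm) set)"
    unfolding S_eq
  proof
    show "sector_simplex (2 * b) \<subseteq> convex hull vertex_set b"
      using b_pos by (rule sector_simplex_subset_convex_hull)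
    show "convex hull vertex_set b \<subseteq> sector_simplex (2 * b)"
      using b_pos by (intro hull_minimal vertex_set_subset_sector_simplex convex_sector_simplex) simp
  qed
  then show ?thesis using finite_vertex_set unfolding polytope_def by blast
qed

end
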